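(* Let $\mathcal{A}\in\mathbb{R}^{n_1\times n_2\times n_3}$ be nonzero, and let $\mathcal{A}=\mathcal{U}*\mathcal{S}*\mathcal{V}^*$ be its t-SVD, with singular values in each Fourier-domain slice ordered nonincreasingly, so that $\mathcal{S}(1,1,:)\neq 0$. Define the rank-one tensor $$\mathcal{M}_1=\mathcal{U}(:,1,:)*\frac{\mathcal{S}(1,1,:)}{\|\mathcal{S}(1,1,:)\|_F}*\mathcal{V}(:,1,:)^*.$$ Then $$\langle \mathcal{M}_1,\mathcal{A}\rangle\;\ge\;\frac{\|\mathcal{A}\|_F}{\sqrt{\min(n_1,n_2)}}.$$
   Context: For $\mathcal{A}\in\mathbb{R}^{n_1\times n_2\times n_3}$, $\hat{\mathcal{A}}$ denotes the discrete Fourier transform of $\mathcal{A}$ along the third dimension (applied to every tube $\mathcal{A}(i,j,:)$), with frontal slices $\hat A^{(k)}=\hat{\mathcal{A}}(:,:,k)$. The t-product $\mathcal{A}*\mathcal{B}$ of $\mathcal{A}\in\mathbb{R}^{n_1\times n_2\times n_3}$ and $\mathcal{B}\in\mathbb{R}^{n_2\times l\times n_3}$ is the $n_1\times l\times n_3$ tensor whose Fourier-domain frontal slices are the matrix products $\hat A^{(k)}\hat B^{(k)}$, $k=1,\dots,n_3$ (equivalently, fold(bcirc($\mathcal{A}$)·unfold($\mathcal{B}$))). The conjugate transpose $\mathcal{A}^*$ is obtained by conjugate-transposing each frontal slice and reversing the order of frontal slices $2,\dots,n_3$. A tensor is f-diagonal if each frontal slice is diagonal. The t-SVD is $\mathcal{A}=\mathcal{U}*\mathcal{S}*\mathcal{V}^*$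 with $\mathcal{U},\mathcal{V}$ orthogonal ($\mathcal{Q}^**\mathcal{Q}=\mathcal{Q}*\mathcal{Q}^*=\mathcal{I}$, where $\mathcal{I}$ has the identity as first frontal slice and zero elsewhere) and $\mathcal{S}$ f-diagonal; it is obtained from SVDs $\hat A^{(k)}=\hat U^{(k)}\hat S^{(k)}\hat V^{(k)*}$ of the Fourier slices, with the diagonal entries of each $\hat S^{(k)}$ in nonincreasing order. $\langle\cdot,\cdot\rangle$ is the entrywise (Frobenius) inner product and $\|\cdot\|_F$ its norm. *)

theory Defs
  imports Complex_Main
begin

text \<open>Real third-order tensors of size n1 x n2 x n3 are represented as functions
  nat => nat => nat => real; only the entries with indices i < n1, j < n2, k < n3
  (0-based) are meaningful.\<close>

type_synonym tensor = "nat \<Rightarrow> nat \<Rightarrow> nat \<Rightarrow> real"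

definition tdft :: "nat \<Rightarrow> tensor \<Rightarrow> nat \<Rightarrow> nat \<Rightarrow> nat \<Rightarrow> complex" where
  "tdft n3 A i j k = (\<Sum>l<n3. complex_of_real (A i j l) * cis (- 2 * pi * real k * real l / real n3))"

text \<open>t-product of an (n1 x n2 x n3) tensor A with an (n2 x l x n3) tensor B:
  fold(bcirc(A) * unfold(B)), i.e. circular convolution of tubes.\<close>
definition tprod :: "nat \<Rightarrow> nat \<Rightarrow> tensor \<Rightarrow> tensor \<Rightarrow> tensor" where
  "tprod n2 n3 A B i j k = (\<Sum>m<n2. \<Sum>l<n3. A i m ((k + n3 - l) mod n3) * B m j l)"

text \<open>Conjugate transpose (real case): transpose each frontal slice and reverse slices 2..n3.\<close>
definition ttrans :: "nat \<Rightarrow> tensor \<Rightarrow> tensor" where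
  "ttrans n3 A i j k = A j i ((n3 - k) mod n3)"

definition tident :: tensor where
  "tident i j k = (if i = j \<and> k = 0 then 1 else 0)"

definition teq :: "nat \<Rightarrow> nat \<Rightarrow> nat \<Rightarrow> tensor \<Rightarrow> tensor \<Rightarrow> bool" where
  "teq n1 n2 n3 A B \<longleftrightarrow> (\<forall>i<n1. \<forall>j<n2. \<forall>k<n3. A i j k = B i j k)"

definition torth :: "nat \<Rightarrow> nat \<Rightarrow> tensor \<Rightarrow> bool" where
  "torth n n3 Q \<longleftrightarrow> teq n n n3 (tprod n n3 (ttrans n3 Q) Q) tident
                    \<and> teq n n n3 (tprod n n3 Q (ttrans n3 Q)) tident"

definition fdiag :: "nat \<Rightarrow> nat \<Rightarrow> nat \<Rightarrow> tensor \<Rightarrow> bool" where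
  "fdiag n1 n2 n3 S \<longleftrightarrow> (\<forall>i<n1. \<forall>j<n2. \<forall>k<n3. i \<noteq> j \<longrightarrow> S i j k = 0)"

definition tinner :: "nat \<Rightarrow> nat \<Rightarrow> nat \<Rightarrow> tensor \<Rightarrow> tensor \<Rightarrow> real" where
  "tinner n1 n2 n3 A B = (\<Sum>i<n1. \<Sum>j<n2. \<Sum>k<n3. A i j k * B i j k)"

definition tfro :: "nat \<Rightarrow> nat \<Rightarrow> nat \<Rightarrow> tensor \<Rightarrow> real" where
  "tfro n1 n2 n3 A = sqrt (tinner n1 n2 n3 A A)"

definition is_tsvd :: "nat \<Rightarrow> nat \<Rightarrow> nat \<Rightarrow> tensor \<Rightarrow> tensor \<Rightarrow> tensor \<Rightarrow> tensor \<Rightarrow> bool" where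
  "is_tsvd n1 n2 n3 A U S V \<longleftrightarrow>
     torth n1 n3 U \<and> torth n2 n3 V \<and> fdiag n1 n2 n3 S \<and>
     teq n1 n2 n3 A (tprod n2 n3 (tprod n1 n3 U S) (ttrans n3 V)) \<and>
     (\<forall>k<n3. \<forall>i<min n1 n2.
        Im (tdft n3 S i i k) = 0 \<and> 0 \<le> Re (tdft n3 S i i k) \<and>
        (Suc i < min n1 n2 \<longrightarrow> Re (tdft n3 S (Suc i) (Suc i) k) \<le> Re (tdft n3 S i i k)))"

definition lat_slice :: "tensor \<Rightarrow> nat \<Rightarrow> tensor" where
  "lat_slice Q j = (\<lambda>i _ k. Q i j k)"

definition tube :: "tensor \<Rightarrow> nat \<Rightarrow> nat \<Rightarrow> tensor" where
  "tube T i j = (\<lambda>_ _ k. T i j k)"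

text \<open>M1 = U(:,1,:) * (S(1,1,:) / ||S(1,1,:)||_F) * V(:,1,:)^*  (first index is 0 here).\<close>
definition rank1_M1 :: "nat \<Rightarrow> tensor \<Rightarrow> tensor \<Rightarrow> tensor \<Rightarrow> tensor" where
  "rank1_M1 n3 U S V =
     tprod 1 n3
       (tprod 1 n3 (lat_slice U 0) (\<lambda>a b k. tube S 0 0 a b k / tfro 1 1 n3 (tube S 0 0)))
       (ttrans n3 (lat_slice V 0))"

end

theory Submission
  imports Defs
begin

text \<open>The t-product is a convolution along the third mode, so the inner product satisfies
  the adjoint identities of matrix algebra; hence multiplication by the orthogonal tensors
  of a t-SVD preserves the Frobenius norm, and \<open>\<langle>\<M>\<^sub>1, \<A>\<rangle>\<close> collapses to
  \<open>\<parallel>\<S>(1,1,:)\<parallel>\<^sub>F\<close>. Since \<open>\<S>\<close> is f-diagonal, \<open>\<parallel>\<A>\<parallel>\<^sub>F\<^sup>2 = \<parallel>\<S>\<parallel>\<^sub>F\<^sup>2\<close> is the sum of the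
  \<open>min(n\<^sub>1,n\<^sub>2)\<close> squared norms \<open>\<parallel>\<S>(i,i,:)\<parallel>\<^sub>F\<^sup>2\<close>. By Parseval each of these is \<open>1/n\<^sub>3\<close> times
  the sum of the squared singular values in position \<open>i\<close> of the Fourier slices, and these
  are largest for \<open>i = 1\<close>.\<close>

lemma mod_less_double: "(a::nat) < 2 * n \<Longrightarrow> a mod n = (if a < n then a else a - n)"
  by (simp add: le_mod_geq)

lemma sum_cis_multiple_eq_0:
  fixes d :: int
  assumes "d \<noteq> 0" "\<bar>d\<bar> < int n"
  shows "(\<Sum>k<n. cis (2 * pi * real k * of_int d / real n)) = 0"
proof -
  define w where "w = cis (2 * pi * of_int d / real n)"
  have n: "n > 0" using assms by linarith
  have "w \<noteq> 1"
  proof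
    assume "w = 1"
    then obtain m :: int where "2 * pi * of_int d / real n = of_int m * 2 * pi"
      by (auto simp: w_def complex_eq_iff cos_one_2pi_int)
    with n have "d = int n * m"
      by (simp add: field_simps) (metis of_int_eq_iff of_int_mult of_int_of_nat_eq)
    with \<open>d \<noteq> 0\<close> have "\<bar>d\<bar> = int n * \<bar>m\<bar>" "\<bar>m\<bar> \<ge> 1"
      by (auto simp: abs_mult)
    then have "\<bar>d\<bar> \<ge> int n" using mult_left_mono[of 1 "\<bar>m\<bar>" "int n"] by simp
    with assms show False by simp
  qed
  have "(\<Sum>k<n. cis (2 * pi * real k * of_int d / real n)) = (\<Sum>k<n. w ^ k)"
    by (intro sum.cong refl) (auto simp: w_def DeMoivre mult_ac)
  also have "\<dots> = (w ^ n - 1) / (w - 1)"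
    using \<open>w \<noteq> 1\<close> by (subst geometric_sum) auto
  also have "w ^ n = cis (2 * pi * of_int d)" using n by (simp add: w_def DeMoivre)
  also have "\<dots> = 1" by (simp add: complex_eq_iff)
  finally show ?thesis by simp
qed

lemma sum_cis_orthogonal:
  assumes "l < n" "l' < n"
  shows "(\<Sum>k<n. cis (2 * pi * real k * (real l' - real l) / real n)) = (if l = l' then of_nat n else 0)"
proof (cases "l = l'")
  case False
  have "(\<Sum>k<n. cis (2 * pi * real k * (real l' - real l) / real n)) =
        (\<Sum>k<n. cis (2 * pi * real k * of_int (int l' - int l) / real n))" by simp
  also have "\<dots> = 0" using False assms by (intro sum_cis_multiple_eq_0) auto
  finally show ?thesis using False by simp
qed simp

lemma dft_parseval:
  fixes x :: "nat \<Rightarrow> real"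
  shows "(\<Sum>k<n. (cmod (\<Sum>l<n. of_real (x l) * cis (- 2 * pi * real k * real l / real n)))\<^sup>2)
         = real n * (\<Sum>l<n. (x l)\<^sup>2)"
proof -
  define z where "z k = (\<Sum>l<n. of_real (x l) * cis (- 2 * pi * real k * real l / real n))" for k
  have z_cnj: "z k * cnj (z k) = (\<Sum>l<n. \<Sum>l'<n. of_real (x l * x l') *
              cis (2 * pi * real k * (real l' - real l) / real n))" for k
    unfolding z_def cnj_sum sum_product
    by (intro sum.cong refl) (simp add: cis_cnj cis_mult algebra_simps diff_divide_distrib)
  have "(\<Sum>k<n. complex_of_real ((cmod (z k))\<^sup>2)) = (\<Sum>k<n. z k * cnj (z k))"
    by (intro sum.cong refl) (rule complex_norm_square)
  also have "\<dots> = (\<Sum>l<n. \<Sum>l'<n. of_real (x l * x l') *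
              (\<Sum>k<n. cis (2 * pi * real k * (real l' - real l) / real n)))"
    unfolding z_cnj sum_distrib_left
    by (rule trans[OF sum.swap], rule sum.cong[OF refl], rule sum.swap)
  also have "\<dots> = (\<Sum>l<n. \<Sum>l'<n. of_real (x l * x l') * (if l = l' then of_nat n else 0))"
    by (intro sum.cong refl) (simp add: sum_cis_orthogonal)
  also have "\<dots> = complex_of_real (real n * (\<Sum>l<n. (x l)\<^sup>2))"
    by (simp add: if_distrib sum_distrib_left power2_eq_square mult_ac cong: if_cong)
  finally show ?thesis unfolding z_def of_real_sum[symmetric] of_real_eq_iff .
qed

lemma sum_mod_shift:
  fixes f :: "nat \<Rightarrow> 'a::comm_monoid_add"
  assumes "c < n"
  shows "(\<Sum>t<n. f ((t + c) mod n)) = (\<Sum>t<n. f t)"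
  by (rule sum.reindex_bij_witness[where j="\<lambda>t. (t + c) mod n" and i="\<lambda>s. (s + n - c) mod n"])
    (use assms in \<open>auto simp: mod_less_double\<close>)

lemma sum_mod_reflect:
  fixes f :: "nat \<Rightarrow> 'a::comm_monoid_add"
  shows "(\<Sum>t<n. f ((n - t) mod n)) = (\<Sum>t<n. f t)"
  by (rule sum.reindex_bij_witness[where j="\<lambda>t. (n - t) mod n" and i="\<lambda>t. (n - t) mod n"])
    (auto simp: mod_less_double)

lemma sum_rotate3:
  "(\<Sum>a\<in>A. \<Sum>b\<in>B. \<Sum>c\<in>C. f a b c) = (\<Sum>c\<in>C. \<Sum>a\<in>A. \<Sum>b\<in>B. f a b c)"
  by (simp only: sum.swap[of _ B C] sum.swap[of _ A C])

lemma tprod_cong: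
  assumes "\<And>m l. m < p \<Longrightarrow> l < n \<Longrightarrow> X i m l = X' i m l"
    and "\<And>m l. m < p \<Longrightarrow> l < n \<Longrightarrow> Y m j l = Y' m j l"
  shows "tprod p n X Y i j k = tprod p n X' Y' i j k"
  unfolding tprod_def using assms by (intro sum.cong refl) (auto intro: gr0I)

lemma tinner_cong:
  assumes "\<And>i j k. i < n1 \<Longrightarrow> j < n2 \<Longrightarrow> k < n3 \<Longrightarrow> X i j k = X' i j k"
    and "\<And>i j k. i < n1 \<Longrightarrow> j < n2 \<Longrightarrow> k < n3 \<Longrightarrow> Z i j k = Z' i j k"
  shows "tinner n1 n2 n3 X Z = tinner n1 n2 n3 X' Z'"
  unfolding tinner_def using assms by (intro sum.cong refl) auto

lemma tinner_self_nonneg: "0 \<le> tinner n1 n2 n3 A A"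
  unfolding tinner_def by (intro sum_nonneg) auto

lemma tinner_div_tfro_self:
  "tinner n1 n2 n3 (\<lambda>i j k. A i j k / tfro n1 n2 n3 A) A = tfro n1 n2 n3 A"
proof -
  have "tinner n1 n2 n3 (\<lambda>i j k. A i j k / tfro n1 n2 n3 A) A = (tfro n1 n2 n3 A)\<^sup>2 / tfro n1 n2 n3 A"
    using tinner_self_nonneg[of n1 n2 n3 A] by (simp add: tinner_def tfro_def sum_divide_distrib)
  then show ?thesis by (simp add: power2_eq_square)
qed

lemma ttrans_ttrans: "k < n \<Longrightarrow> ttrans n (ttrans n X) i j k = X i j k"
  by (cases "k = 0") (auto simp: ttrans_def mod_less_double)

lemma tprod_tident_right:
  assumes "j < q" "k < n"
  shows "tprod q n X tident i j k = X i j k"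
proof -
  have "X i m ((k + n - l) mod n) * tident m j l = (if l = 0 then if m = j then X i j k else 0 else 0)"
    for m l using assms by (simp add: tident_def)
  then show ?thesis using assms by (simp add: tprod_def)
qed
lemma tprod_tident_left:
  assumes "i < q" "k < n"
  shows "tprod q n tident X i j k = X i j k"
proof -
  have "tident i m ((k + n - l) mod n) * X m j l = (if l = k then if m = i then X i j k else 0 else 0)"
    if "l < n" for m l using assms that by (auto simp: tident_def mod_less_double)
  then show ?thesis using assms by (simp add: tprod_def)
qed

lemma tprod_assoc:
  assumes "k < n"
  shows "tprod q n (tprod p n X Y) Z i j k = tprod p n X (tprod q n Y Z) i j k"
proof -
  have "tprod q n (tprod p n X Y) Z i j k =
     (\<Sum>m<p. \<Sum>m'<q. \<Sum>l<n. \<Sum>t<n. X i m (((k + n - l) mod n + n - t) mod n) * Y m m' t * Z m' j l)"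
    unfolding tprod_def sum_distrib_right
    by (simp only: sum.swap[of _ "{..<q}" "{..<p}"] sum.swap[of _ "{..<n}" "{..<p}"])
  also have "\<dots> = (\<Sum>m<p. \<Sum>m'<q. \<Sum>l<n. \<Sum>t<n. X i m ((k + n - (t + l) mod n) mod n) * Y m m' (((t + l) mod n + n - l) mod n) * Z m' j l)"
  proof -
    have "((t + l) mod n + n - l) mod n = t"
      and "(k + n - (t + l) mod n) mod n = ((k + n - l) mod n + n - t) mod n"
      if "t < n" "l < n" for t l
      using assms that by (auto simp: mod_less_double)
    then show ?thesis by (intro sum.cong refl) simp
  qed
  also have "\<dots> = (\<Sum>m<p. \<Sum>m'<q. \<Sum>l<n. \<Sum>t<n. X i m ((k + n - t) mod n) * Y m m' ((t + n - l) mod n) * Z m' j l)"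
    by (intro sum.cong refl sum_mod_shift[where f="\<lambda>s. X i m ((k + n - s) mod n) * Y m m' ((s + n - l) mod n) * Z m' j l" for m m' l]) simp
  also have "\<dots> = tprod p n X (tprod q n Y Z) i j k"
    unfolding tprod_def sum_distrib_left
    by (rule sum.cong[OF refl], rule trans[OF sum_rotate3]) (simp only: mult.assoc)
  finally show ?thesis .
qed

lemma tinner_tprod_left:
  "tinner n1 n2 n (tprod p n X Y) Z = tinner p n2 n Y (tprod n1 n (ttrans n X) Z)"
proof -
  have reorder: "(\<Sum>i\<in>I. \<Sum>j\<in>J. \<Sum>k\<in>K. \<Sum>m\<in>M. \<Sum>l\<in>L. f i j k m l)
      = (\<Sum>m\<in>M. \<Sum>j\<in>J. \<Sum>l\<in>L. \<Sum>i\<in>I. \<Sum>k\<in>K. f i j k m l)" for f :: "_ \<Rightarrow> _ \<Rightarrow> _ \<Rightarrow> _ \<Rightarrow> _ \<Rightarrow> real" and I J K M L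
    by (simp only: sum.swap[of _ K M] sum.swap[of _ K L] sum.swap[of _ J M] sum.swap[of _ I M]
        sum.swap[of _ I J] sum.swap[of _ I L])
  have "tinner n1 n2 n (tprod p n X Y) Z =
     (\<Sum>m<p. \<Sum>j<n2. \<Sum>l<n. \<Sum>i<n1. \<Sum>k<n. X i m ((k + n - l) mod n) * Y m j l * Z i j k)"
    unfolding tinner_def tprod_def sum_distrib_right by (rule reorder)
  also have "\<dots> = (\<Sum>m<p. \<Sum>j<n2. \<Sum>l<n. \<Sum>i<n1. \<Sum>k<n. Y m j l * (X i m ((n - (l + n - k) mod n) mod n) * Z i j k))"
  proof -
    have "(n - (l + n - k) mod n) mod n = (k + n - l) mod n" if "k < n" "l < n" for k l
      using that by (auto simp: mod_less_double)
    then show ?thesis by (intro sum.cong refl) simp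
  qed
  also have "\<dots> = tinner p n2 n Y (tprod n1 n (ttrans n X) Z)"
    unfolding tinner_def tprod_def ttrans_def sum_distrib_left ..
  finally show ?thesis .
qed

lemma tinner_tprod_right:
  "tinner n1 n2 n (tprod p n X Y) Z = tinner n1 p n X (tprod n2 n Z (ttrans n Y))"
proof -
  have reorder: "(\<Sum>j\<in>J. \<Sum>k\<in>K. \<Sum>m\<in>M. \<Sum>l\<in>L. f j k m l)
      = (\<Sum>m\<in>M. \<Sum>j\<in>J. \<Sum>l\<in>L. \<Sum>k\<in>K. f j k m l)" for f :: "_ \<Rightarrow> _ \<Rightarrow> _ \<Rightarrow> _ \<Rightarrow> real" and J K M L
    by (simp only: sum.swap[of _ K M] sum.swap[of _ J M] sum.swap[of _ K L])
  have "tinner n1 n2 n (tprod p n X Y) Z =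
     (\<Sum>i<n1. \<Sum>m<p. \<Sum>j<n2. \<Sum>l<n. \<Sum>k<n. X i m ((k + n - l) mod n) * Y m j l * Z i j k)"
    unfolding tinner_def tprod_def sum_distrib_right by (intro sum.cong refl reorder)
  \<comment> \<open>substitute \<open>k = t + l\<close>, then \<open>l \<mapsto> -l\<close> (mod \<open>n\<close>)\<close>
  also have "\<dots> = (\<Sum>i<n1. \<Sum>m<p. \<Sum>j<n2. \<Sum>l<n. \<Sum>t<n. X i m (((t + l) mod n + n - l) mod n) * Y m j l * Z i j ((t + l) mod n))"
    by (intro sum.cong refl sum_mod_shift[where f="\<lambda>s. X i m ((s + n - l) mod n) * Y m j l * Z i j s" for i m j l, symmetric]) simp
  also have "\<dots> = (\<Sum>i<n1. \<Sum>m<p. \<Sum>j<n2. \<Sum>l<n. \<Sum>t<n. X i m t * (Z i j ((t + l) mod n) * Y m j l))"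
  proof -
    have "((t + l) mod n + n - l) mod n = t" if "t < n" "l < n" for t l
      using that by (auto simp: mod_less_double)
    then show ?thesis by (intro sum.cong refl) simp
  qed
  also have "\<dots> = (\<Sum>i<n1. \<Sum>m<p. \<Sum>t<n. \<Sum>j<n2. \<Sum>l<n. X i m t * (Z i j ((t + l) mod n) * Y m j l))"
    by (intro sum.cong refl sum_rotate3)
  also have "\<dots> = (\<Sum>i<n1. \<Sum>m<p. \<Sum>t<n. \<Sum>j<n2. \<Sum>l<n. X i m t * (Z i j ((t + n - (n - l) mod n) mod n) * Y m j ((n - (n - l) mod n) mod n)))"
  proof -
    have "(t + n - (n - l) mod n) mod n = (t + l) mod n" "(n - (n - l) mod n) mod n = l"
      if "t < n" "l < n" for t l
      using that by (cases "l = 0"; auto simp: mod_less_double)+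
    then show ?thesis by (intro sum.cong refl) simp
  qed
  also have "\<dots> = (\<Sum>i<n1. \<Sum>m<p. \<Sum>t<n. \<Sum>j<n2. \<Sum>l<n. X i m t * (Z i j ((t + n - l) mod n) * Y m j ((n - l) mod n)))"
    by (intro sum.cong refl sum_mod_reflect[where f="\<lambda>s. X i m t * (Z i j ((t + n - s) mod n) * Y m j ((n - s) mod n))" for i m t j])
  also have "\<dots> = tinner n1 p n X (tprod n2 n Z (ttrans n Y))"
    unfolding tinner_def tprod_def ttrans_def sum_distrib_left ..
  finally show ?thesis .
qed

lemma tprod_ttrans_ttrans: "tprod p n X (ttrans n (ttrans n Y)) i j k = tprod p n X Y i j k"
  by (intro tprod_cong) (simp_all add: ttrans_ttrans)

lemma torth_tprod_cancel_right:
  assumes "torth q n V" "j < q" "k < n"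
  shows "tprod q n (tprod q n W (ttrans n V)) V i j k = W i j k"
proof -
  have "tprod q n (tprod q n W (ttrans n V)) V i j k = tprod q n W (tprod q n (ttrans n V) V) i j k"
    using assms by (simp add: tprod_assoc)
  also have "\<dots> = tprod q n W tident i j k"
    using assms by (intro tprod_cong) (auto simp: torth_def teq_def)
  also have "\<dots> = W i j k" using assms by (simp add: tprod_tident_right)
  finally show ?thesis .
qed

lemma torth_tprod_cancel_left:
  assumes "torth q n U" "i < q" "k < n"
  shows "tprod q n (ttrans n U) (tprod q n U S) i j k = S i j k"
proof -
  have "tprod q n (ttrans n U) (tprod q n U S) i j k = tprod q n (tprod q n (ttrans n U) U) S i j k"
    using assms by (simp add: tprod_assoc)
  also have "\<dots> = tprod q n tident S i j k"
    using assms by (intro tprod_cong) (auto simp: torth_def teq_def)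
  also have "\<dots> = S i j k" using assms by (simp add: tprod_tident_left)
  finally show ?thesis .
qed

lemma tinner_torth_right:
  assumes "torth n2 n V"
  shows "tinner n1 n2 n (tprod n2 n W (ttrans n V)) (tprod n2 n W (ttrans n V)) = tinner n1 n2 n W W"
proof -
  have "tinner n1 n2 n (tprod n2 n W (ttrans n V)) (tprod n2 n W (ttrans n V))
      = tinner n1 n2 n W (tprod n2 n (tprod n2 n W (ttrans n V)) (ttrans n (ttrans n V)))"
    by (rule tinner_tprod_right)
  also have "\<dots> = tinner n1 n2 n W W"
    using assms by (intro tinner_cong) (simp_all add: tprod_ttrans_ttrans torth_tprod_cancel_right)
  finally show ?thesis .
qed

lemma tinner_torth_left:
  assumes "torth n1 n U"
  shows "tinner n1 n2 n (tprod n1 n U S) (tprod n1 n U S) = tinner n1 n2 n S S"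
proof -
  have "tinner n1 n2 n (tprod n1 n U S) (tprod n1 n U S)
      = tinner n1 n2 n S (tprod n1 n (ttrans n U) (tprod n1 n U S))"
    by (rule tinner_tprod_left)
  also have "\<dots> = tinner n1 n2 n S S"
    using assms by (intro tinner_cong) (simp_all add: torth_tprod_cancel_left)
  finally show ?thesis .
qed

lemma tsvd_tinner_self:
  assumes "is_tsvd n1 n2 n A U S V"
  shows "tinner n1 n2 n A A = tinner n1 n2 n S S"
proof -
  let ?W = "tprod n1 n U S"
  have "tinner n1 n2 n A A = tinner n1 n2 n (tprod n2 n ?W (ttrans n V)) (tprod n2 n ?W (ttrans n V))"
    using assms by (intro tinner_cong) (auto simp: is_tsvd_def teq_def)
  also have "\<dots> = tinner n1 n2 n ?W ?W"
    using assms by (intro tinner_torth_right) (simp add: is_tsvd_def)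
  also have "\<dots> = tinner n1 n2 n S S"
    using assms by (intro tinner_torth_left) (simp add: is_tsvd_def)
  finally show ?thesis .
qed

lemma tsvd_first_tube:
  assumes tsvd: "is_tsvd n1 n2 n A U S V" and "0 < n1" "0 < n2" "k < n"
  shows "tprod n1 n (ttrans n (lat_slice U 0)) (tprod n2 n A (lat_slice V 0)) 0 0 k = S 0 0 k"
proof -
  let ?W = "tprod n1 n U S"
  have U: "torth n1 n U" and V: "torth n2 n V"
    and A: "teq n1 n2 n A (tprod n2 n ?W (ttrans n V))"
    using tsvd by (simp_all add: is_tsvd_def)
  have "tprod n2 n A (lat_slice V 0) m 0 l = ?W m 0 l" if "m < n1" "l < n" for m l
  proof -
    have "tprod n2 n A (lat_slice V 0) m 0 l = tprod n2 n (tprod n2 n ?W (ttrans n V)) V m 0 l"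
      using A that by (intro tprod_cong) (simp_all add: teq_def lat_slice_def)
    also have "\<dots> = ?W m 0 l"
      using V \<open>0 < n2\<close> \<open>l < n\<close> by (rule torth_tprod_cancel_right)
    finally show ?thesis .
  qed
  then have "tprod n1 n (ttrans n (lat_slice U 0)) (tprod n2 n A (lat_slice V 0)) 0 0 k
      = tprod n1 n (ttrans n U) ?W 0 0 k"
    by (intro tprod_cong) (simp_all add: ttrans_def lat_slice_def)
  also have "\<dots> = S 0 0 k"
    using U assms by (intro torth_tprod_cancel_left) simp_all
  finally show ?thesis .
qed

lemma tsvd_tinner_rank1_M1:
  assumes "is_tsvd n1 n2 n A U S V" "0 < n1" "0 < n2"
  shows "tinner n1 n2 n (rank1_M1 n U S V) A = tfro 1 1 n (tube S 0 0)"
proof -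
  define s where "s = (\<lambda>a b k. tube S 0 0 a b k / tfro 1 1 n (tube S 0 0))"
  let ?U1 = "lat_slice U 0" and ?V1 = "lat_slice V 0"
  have "tinner n1 n2 n (rank1_M1 n U S V) A
      = tinner n1 1 n (tprod 1 n ?U1 s) (tprod n2 n A (ttrans n (ttrans n ?V1)))"
    unfolding rank1_M1_def s_def by (rule tinner_tprod_right)
  also have "\<dots> = tinner 1 1 n s (tprod n1 n (ttrans n ?U1) (tprod n2 n A (ttrans n (ttrans n ?V1))))"
    by (rule tinner_tprod_left)
  also have "\<dots> = tinner 1 1 n s (tube S 0 0)"
  proof (intro tinner_cong refl)
    fix i j k assume "i < (1::nat)" "j < (1::nat)" "k < n"
    then have "i = 0" "j = 0" by simp_all
    have "tprod n1 n (ttrans n ?U1) (tprod n2 n A (ttrans n (ttrans n ?V1))) 0 0 k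
        = tprod n1 n (ttrans n ?U1) (tprod n2 n A ?V1) 0 0 k"
      by (intro tprod_cong) (simp_all add: ttrans_ttrans)
    also have "\<dots> = S 0 0 k" using assms \<open>k < n\<close> by (rule tsvd_first_tube)
    finally show "tprod n1 n (ttrans n ?U1) (tprod n2 n A (ttrans n (ttrans n ?V1))) i j k = tube S 0 0 i j k"
      using \<open>i = 0\<close> \<open>j = 0\<close> by (simp add: tube_def)
  qed
  also have "\<dots> = tfro 1 1 n (tube S 0 0)"
    unfolding s_def by (rule tinner_div_tfro_self)
  finally show ?thesis .
qed

lemma tinner_fdiag_self:
  assumes "fdiag n1 n2 n S"
  shows "tinner n1 n2 n S S = (\<Sum>i<min n1 n2. tinner 1 1 n (tube S i i) (tube S i i))"
proof -
  have "tinner n1 n2 n S S = (\<Sum>i<n1. if i < n2 then tinner 1 1 n (tube S i i) (tube S i i) else 0)"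
    unfolding tinner_def
  proof (intro sum.cong refl)
    fix i assume "i \<in> {..<n1}"
    then have "(\<Sum>j<n2. \<Sum>k<n. S i j k * S i j k)
        = (\<Sum>j<n2. if j = i then \<Sum>k<n. S i i k * S i i k else 0)"
      using assms by (intro sum.cong refl) (auto simp: fdiag_def)
    then show "(\<Sum>j<n2. \<Sum>k<n. S i j k * S i j k) =
        (if i < n2 then \<Sum>a<1. \<Sum>b<1. \<Sum>k<n. tube S i i a b k * tube S i i a b k else 0)"
      by (simp add: tube_def)
  qed
  also have "\<dots> = (\<Sum>i\<in>{..<n1} \<inter> {..<n2}. tinner 1 1 n (tube S i i) (tube S i i))"
    by (subst sum.inter_restrict) auto
  also have "{..<n1} \<inter> {..<n2} = {..<min n1 n2}" by auto
  finally show ?thesis .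
qed

lemma tube_tinner_dft:
  "real n * tinner 1 1 n (tube S i j) (tube S i j) = (\<Sum>k<n. (cmod (tdft n S i j k))\<^sup>2)"
  unfolding tdft_def dft_parseval by (simp add: tinner_def tube_def power2_eq_square)

lemma tsvd_tube_tinner_le_first:
  assumes tsvd: "is_tsvd n1 n2 n A U S V" and i: "i < min n1 n2"
  shows "tinner 1 1 n (tube S i i) (tube S i i) \<le> tinner 1 1 n (tube S 0 0) (tube S 0 0)"
proof -
  have ordered: "Im (tdft n S i i k) = 0 \<and> 0 \<le> Re (tdft n S i i k) \<and>
      (Suc i < min n1 n2 \<longrightarrow> Re (tdft n S (Suc i) (Suc i) k) \<le> Re (tdft n S i i k))"
    if "k < n" "i < min n1 n2" for i k
    using tsvd that by (simp add: is_tsvd_def)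
  have norm_eq_Re: "cmod (tdft n S i i k) = Re (tdft n S i i k)" if "k < n" "i < min n1 n2" for i k
    using ordered[OF that] by (simp add: cmod_def)
  have Re_le: "Re (tdft n S i i k) \<le> Re (tdft n S 0 0 k)" if "k < n" "i < min n1 n2" for i k
    using that(2)
  proof (induction i)
    case (Suc i)
    then show ?case using ordered[OF \<open>k < n\<close>, of i] by auto
  qed simp
  have "(\<Sum>k<n. (cmod (tdft n S i i k))\<^sup>2) \<le> (\<Sum>k<n. (cmod (tdft n S 0 0 k))\<^sup>2)"
  proof (intro sum_mono power_mono)
    fix k assume "k \<in> {..<n}"
    then show "cmod (tdft n S i i k) \<le> cmod (tdft n S 0 0 k)"
      using i by (simp add: norm_eq_Re Re_le)
  qed simp
  then have "real n * tinner 1 1 n (tube S i i) (tube S i i) \<le> real n * tinner 1 1 n (tube S 0 0) (tube S 0 0)"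
    by (simp only: tube_tinner_dft)
  moreover have "n = 0 \<Longrightarrow> tinner 1 1 n (tube S i i) (tube S i i) = 0"
    by (simp add: tinner_def)
  ultimately show ?thesis using tinner_self_nonneg[of 1 1 n "tube S 0 0"] by (cases "n = 0") auto
qed

theorem lemma2p2:
  fixes n1 n2 n3 :: nat and A U S V :: tensor
  assumes nonzero: "\<exists>i<n1. \<exists>j<n2. \<exists>k<n3. A i j k \<noteq> 0"
    and tsvd: "is_tsvd n1 n2 n3 A U S V"
  shows "tinner n1 n2 n3 (rank1_M1 n3 U S V) A \<ge> tfro n1 n2 n3 A / sqrt (real (min n1 n2))"
proof -
  have "0 < n1" "0 < n2" using nonzero by auto
  let ?m = "min n1 n2" and ?s = "tube S 0 0"
  have "(tfro n1 n2 n3 A)\<^sup>2 = (\<Sum>i<?m. tinner 1 1 n3 (tube S i i) (tube S i i))"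
    using tsvd tinner_self_nonneg[of n1 n2 n3 A]
    by (simp add: tfro_def tsvd_tinner_self tinner_fdiag_self is_tsvd_def)
  also have "\<dots> \<le> (\<Sum>i<?m. tinner 1 1 n3 ?s ?s)"
    by (intro sum_mono tsvd_tube_tinner_le_first[OF tsvd]) simp
  also have "\<dots> = real ?m * tinner 1 1 n3 ?s ?s" by simp
  also have "\<dots> = (sqrt (real ?m) * tfro 1 1 n3 ?s)\<^sup>2"
    by (simp add: tfro_def power_mult_distrib tinner_self_nonneg)
  finally have "tfro n1 n2 n3 A \<le> sqrt (real ?m) * tfro 1 1 n3 ?s"
    by (rule power2_le_imp_le) (simp add: tfro_def tinner_self_nonneg)
  then show ?thesis
    using \<open>0 < n1\<close> \<open>0 < n2\<close> by (simp add: tsvd_tinner_rank1_M1[OF tsvd] divide_le_eq mult.commute)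
qed

end
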